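(* (i) Suppose the density $f$ is unimodal and the noise has a unimodal failure rate. Let $r^*_0\in\arg\max\{B_r/r:1\le r\le n-1\}$ and $\hat r=\max\{r:\beta_r>0\}$. Then $r^*_0\le\hat r$, and for every $\theta\in[0,1]$ there exists $r^*(\theta)\in\arg\max\{A_r(\theta):1\le r\le n-1\}$ with $r^*_0\le r^*(\theta)\le\hat r$. (ii) If the noise distribution has a decreasing failure rate (DFR), then $r^*(\theta)=n-1$ maximizes $A_r(\theta)$ over $1\le r\le n-1$ for every $\theta\in[0,1]$; i.e., maximal prize sharing ${\bf v}^{n-1}$ is optimal for any loss aversion.
   Context: Fix an integer $n\ge 2$ and a noise distribution with cdf $F$ and density $f$ on $\mathbb R$ (integrals finite). For $r=1,\dots,n$ let $g_r(u)=u^{n-r}(1-u)^{r-1}$ and $\beta_r=\binom{n-1}{r-1}\int g_r'(F(t))f(t)^2dt$; $B_r=\sum_{k=1}^r\beta_k$, which for $1\le r\le n-1$ equals $r\binom{n-1}{r}\int F(t)^{n-1-r}[1-F(t)]^{r-1}f(t)^2dt$. For $\theta\in[0,1]$ and $1\le r\le n-1$, $A_r(\theta)=\big[1+\theta\big(\frac{2r}{n}-1\big)\big]\frac{B_r}{r}$; by Proposition 2, ${\bf v}^{r}$ (awarding $r$ equal top prizes $1/r$, zero otherwise) with $r$ maximizing $A_r(\theta)$ is an effort-maximizing prize schedule. The failure (hazard) rate is $h(t)=f(t)/(1-F(t))$. A function is unimodal if it is (weakly) first increasing then decreasing (monotone functions included); the noise has a unimodal failure rate if $h$ is unimodal; it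 is DFR if $h$ is (weakly) decreasing. *)

theory Defs
  imports "HOL-Analysis.Analysis"
begin

definition gpoly :: "nat \<Rightarrow> nat \<Rightarrow> real \<Rightarrow> real" where
  "gpoly n r u = u ^ (n - r) * (1 - u) ^ (r - 1)"

definition beta :: "(real \<Rightarrow> real) \<Rightarrow> (real \<Rightarrow> real) \<Rightarrow> nat \<Rightarrow> nat \<Rightarrow> real" where
  "beta F f n r = real ((n - 1) choose (r - 1)) *
     (\<integral>t. deriv (gpoly n r) (F t) * (f t)\<^sup>2 \<partial>lborel)"

definition Bsum :: "(real \<Rightarrow> real) \<Rightarrow> (real \<Rightarrow> real) \<Rightarrow> nat \<Rightarrow> nat \<Rightarrow> real" where
  "Bsum F f n r = (\<Sum>k = 1..r. beta F f n k)"

definition Aobj :: "(real \<Rightarrow> real) \<Rightarrow> (real \<Rightarrow> real) \<Rightarrow> nat \<Rightarrow> real \<Rightarrow> nat \<Rightarrow> real" where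
  "Aobj F f n \<theta> r = (1 + \<theta> * (2 * real r / real n - 1)) * (Bsum F f n r / real r)"

definition hazard :: "(real \<Rightarrow> real) \<Rightarrow> (real \<Rightarrow> real) \<Rightarrow> real \<Rightarrow> real" where
  "hazard F f t = f t / (1 - F t)"

text \<open>unimodal on S: weakly increasing on an initial segment I of S, weakly decreasing
  on the rest (I may be empty or all of S, so monotone functions are included)\<close>
definition unimodal_on :: "real set \<Rightarrow> (real \<Rightarrow> real) \<Rightarrow> bool" where
  "unimodal_on S g \<longleftrightarrow> (\<exists>I. I \<subseteq> S \<and> (\<forall>x\<in>I. \<forall>y\<in>S. y \<le> x \<longrightarrow> y \<in> I)
      \<and> mono_on I g \<and> antimono_on (S - I) g)"

text \<open>interior of the support of the noise, where the failure rate is meaningful\<close>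
definition supp_int :: "(real \<Rightarrow> real) \<Rightarrow> real set" where
  "supp_int F = {t. 0 < F t \<and> F t < 1}"

end

theory Submission
  imports Defs "HOL-Probability.Distribution_Functions" "HOL-Probability.Distributions"
begin

text \<open>
  Part (i) needs only beta_1 > 0. Write A_r(theta) = w_r * B_r / r = c_r * B_r, where the weight
  w_r = 1 + theta (2r/n - 1) increases and c_r = (1 - theta)/r + 2 theta/n decreases in r.
  A maximiser of A(theta) below r0 can therefore be replaced by r0, which maximises B_r / r, and
  one above rhat by rhat, beyond which B_r cannot grow.

  For (ii), B_r = r * Bratio n r with Bratio n r = C(n-1,r) \<integral> F^(n-1-r) (1-F)^(r-1) f^2, and
  (r+1) (Bratio n (r+1) - Bratio n r) is a positive multiple of \<integral> psi(F) h f, where psi = g'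
  for n+1 contestants and rank r+2, and h is the failure rate. As F is uniformly distributed
  under f, \<integral> psi(F) f = \<integral>_0^1 psi = 0; since psi is first positive and then negative, a
  decreasing h gives \<integral> psi(F) h f \<ge> c \<integral> psi(F) f = 0 for a suitable threshold c. Hence
  B_r / r increases in r and r = n - 1 is optimal.
\<close>

definition gpoly_deriv :: "nat \<Rightarrow> nat \<Rightarrow> real \<Rightarrow> real" where
  "gpoly_deriv n k u = real (n - k) * u ^ (n - k - 1) * (1 - u) ^ (k - 1)
     - real (k - 1) * u ^ (n - k) * (1 - u) ^ (k - 2)"

lemma has_real_derivative_gpoly: "(gpoly n k has_real_derivative gpoly_deriv n k u) (at u)"
proof -
  have d: "((\<lambda>u. 1 - u) has_real_derivative - 1) (at u)"
    using DERIV_diff[OF DERIV_const DERIV_ident] by simp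
  have "k - 1 - Suc 0 = k - 2" "n - k - Suc 0 = n - k - 1" by simp_all
  with DERIV_mult[OF DERIV_pow[of "n - k" u] DERIV_power[OF d, of "k - 1"]] show ?thesis
    unfolding gpoly_def gpoly_deriv_def by (simp add: mult_ac)
qed

lemma deriv_gpoly: "deriv (gpoly n k) = gpoly_deriv n k"
  using has_real_derivative_gpoly DERIV_imp_deriv by blast

lemma binomial_mult_diff: "(N - j) * (N choose j) = Suc j * (N choose Suc j)"
  by (metis binomial_absorb_comp binomial_absorption)

lemma sum_binomial_gpoly_deriv:
  assumes "Suc m \<le> n - 1"
  shows "(\<Sum>k=1..Suc m. real ((n - 1) choose (k - 1)) * gpoly_deriv n k u)
       = real (Suc m) * real ((n - 1) choose Suc m) * u ^ (n - 1 - Suc m) * (1 - u) ^ m"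
  using assms
proof (induction m)
  case 0
  then show ?case by (simp add: gpoly_deriv_def)
next
  case (Suc m)
  have "m + 3 \<le> n" using Suc.prems by simp
  then obtain a where a: "n = m + 3 + a" using le_Suc_ex by blast
  have "n - 1 - Suc m = Suc a" using a by simp
  with binomial_mult_diff[of "n - 1" "Suc m"]
  have "Suc a * ((n - 1) choose Suc m) = Suc (Suc m) * ((n - 1) choose Suc (Suc m))" by simp
  then have binom: "real ((n - 1) choose Suc m) * real (Suc a)
      = real (Suc (Suc m)) * real ((n - 1) choose Suc (Suc m))"
    by (metis mult.commute of_nat_mult)
  have "(\<Sum>k=1..Suc (Suc m). real ((n - 1) choose (k - 1)) * gpoly_deriv n k u)
     = real (Suc m) * real ((n - 1) choose Suc m) * u ^ Suc a * (1 - u) ^ m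
       + real ((n - 1) choose Suc m) * gpoly_deriv n (Suc (Suc m)) u"
    using Suc a by simp
  also have "\<dots> = real ((n - 1) choose Suc m) * real (Suc a) * u ^ a * (1 - u) ^ Suc m"
  proof -
    have "n - Suc (Suc m) = Suc a" "n - Suc (Suc m) - 1 = a" "Suc (Suc m) - 2 = m"
      using a by simp_all
    then show ?thesis unfolding gpoly_deriv_def by (simp add: algebra_simps)
  qed
  finally show ?case
    unfolding binom using a by simp
qed

lemma continuous_on_gpoly_deriv: "continuous_on S (gpoly_deriv n k)"
  unfolding gpoly_deriv_def by (intro continuous_intros)

lemma integral_01_gpoly_deriv:
  assumes "k < n" "2 \<le> k"
  shows "(\<integral>u. indicator {0..1} u * gpoly_deriv n k u \<partial>lborel) = 0"
proof -
  have "(\<integral>u. indicator {0..1} u * gpoly_deriv n k u \<partial>lborel)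
      = (\<integral>u. indicator {0..1} u *\<^sub>R gpoly_deriv n k u \<partial>lborel)"
    by simp
  also have "\<dots> = gpoly n k 1 - gpoly n k 0"
  proof (rule integral_FTC_atLeastAtMost)
    show "continuous_on {0..1} (gpoly_deriv n k)"
      by (rule continuous_on_gpoly_deriv)
    show "(gpoly n k has_vector_derivative gpoly_deriv n k u) (at u within {0..1})" for u
      using has_real_derivative_gpoly
      by (simp add: has_real_derivative_iff_has_vector_derivative[symmetric] has_field_derivative_at_within)
  qed simp
  also have "\<dots> = 0" using assms by (simp add: gpoly_def power_0_left)
  finally show ?thesis .
qed

lemma gpoly_deriv_factor:
  assumes "k < n" "2 \<le> k"
  shows "gpoly_deriv n k u
    = u ^ (n - k - 1) * (1 - u) ^ (k - 2) * (real (n - k) * (1 - u) - real (k - 1) * u)"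
proof -
  have "n - k = Suc (n - k - 1)" "k - 1 = Suc (k - 2)" using assms by simp_all
  then show ?thesis unfolding gpoly_deriv_def by (simp only: power_Suc) (simp add: algebra_simps)
qed

lemma gpoly_deriv_sign_change:
  assumes "k < n" "2 \<le> k" "u \<in> {0..1}" "v \<in> {0..1}"
    and "0 < gpoly_deriv n k u" "gpoly_deriv n k v < 0"
  shows "u < v"
proof -
  define L where "L x = real (n - k) * (1 - x) - real (k - 1) * x" for x :: real
  have factor: "gpoly_deriv n k x = x ^ (n - k - 1) * (1 - x) ^ (k - 2) * L x" for x
    unfolding L_def by (rule gpoly_deriv_factor[OF assms(1,2)])
  have "0 \<le> x ^ (n - k - 1) * (1 - x) ^ (k - 2)" if "x \<in> {0..1}" for x :: real
    using that by simp
  then have "0 < L u" "L v < 0"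
    using assms(3-6) unfolding factor
    by (metis mult_nonneg_nonpos not_le mult_nonneg_nonneg mult.commute)+
  moreover have "L u - L v = real (n - 1) * (v - u)"
    unfolding L_def using assms(1,2) by (simp add: algebra_simps of_nat_diff)
  ultimately have "0 < real (n - 1) * (v - u)" by linarith
  then show ?thesis by (simp add: zero_less_mult_iff)
qed

lemma ex_gpoly_deriv_pos:
  assumes "k < n" "2 \<le> k"
  shows "\<exists>u\<in>{0<..<1}. 0 < gpoly_deriv n k u"
proof
  define u where "u = real (n - k) / (2 * real (n - 1))"
  show u: "u \<in> {0<..<1}" unfolding u_def using assms by (auto simp: field_simps)
  have "real (n - k) * (1 - u) - real (k - 1) * u = real (n - k) - real (n - 1) * u"
    using assms by (simp add: of_nat_diff algebra_simps)
  also have "real (n - 1) * u = real (n - k) / 2"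
    unfolding u_def using assms by (simp add: field_simps)
  finally have "real (n - k) * (1 - u) - real (k - 1) * u = real (n - k) / 2" by simp
  then show "0 < gpoly_deriv n k u"
    unfolding gpoly_deriv_factor[OF assms] using u assms by simp
qed

lemma Bsum_Suc: "Bsum F f n (Suc r) = Bsum F f n r + beta F f n (Suc r)"
  unfolding Bsum_def by (simp add: sum.cl_ivl_Suc)

lemma Aobj_eq_weighted_Bsum:
  "1 \<le> r \<Longrightarrow> 1 \<le> n \<Longrightarrow> Aobj F f n \<theta> r = ((1 - \<theta>) / real r + 2 * \<theta> / real n) * Bsum F f n r"
  unfolding Aobj_def by (simp add: field_simps)

lemma Aobj_le_of_ratio_le:
  assumes \<theta>: "\<theta> \<in> {0..1}" and "r \<le> s"
    and ratio: "Bsum F f n r / real r \<le> Bsum F f n s / real s" "0 \<le> Bsum F f n s / real s"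
  shows "Aobj F f n \<theta> r \<le> Aobj F f n \<theta> s"
proof -
  define w where "w = (\<lambda>r::nat. 1 + \<theta> * (2 * real r / real n - 1))"
  have w_nonneg: "0 \<le> w k" for k
  proof -
    have "\<theta> * (- 1) \<le> \<theta> * (2 * real k / real n - 1)"
      using \<theta> by (intro mult_left_mono) auto
    then show ?thesis using \<theta> unfolding w_def by auto
  qed
  have "w r \<le> w s"
    unfolding w_def using \<theta> \<open>r \<le> s\<close> by (auto intro!: mult_left_mono divide_right_mono)
  have A: "Aobj F f n \<theta> k = w k * (Bsum F f n k / real k)" for k
    unfolding Aobj_def w_def ..
  show ?thesis
  proof (cases "0 \<le> Bsum F f n r / real r")
    case True
    then show ?thesis
      unfolding A using \<open>w r \<le> w s\<close> ratio(1) w_nonneg by (intro mult_mono) auto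
  next
    case False
    then have "w r * (Bsum F f n r / real r) \<le> 0"
      using w_nonneg by (intro mult_nonneg_nonpos) auto
    also have "0 \<le> w s * (Bsum F f n s / real s)"
      using w_nonneg ratio(2) by (rule mult_nonneg_nonneg)
    finally show ?thesis unfolding A .
  qed
qed

lemma Aobj_le_of_Bsum_le:
  assumes \<theta>: "\<theta> \<in> {0..1}" and "1 \<le> n" "1 \<le> s" "s \<le> r"
    and "Bsum F f n r \<le> Bsum F f n s" "0 < Aobj F f n \<theta> r"
  shows "Aobj F f n \<theta> r \<le> Aobj F f n \<theta> s"
proof -
  define c where "c = (\<lambda>r::nat. (1 - \<theta>) / real r + 2 * \<theta> / real n)"
  have A: "Aobj F f n \<theta> k = c k * Bsum F f n k" if "1 \<le> k" for k
    unfolding c_def using Aobj_eq_weighted_Bsum that \<open>1 \<le> n\<close> by blast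
  have c_nonneg: "0 \<le> c k" for k
    unfolding c_def using \<theta> by auto
  have "c r \<le> c s"
    unfolding c_def using \<theta> \<open>1 \<le> s\<close> \<open>s \<le> r\<close> by (auto intro!: divide_left_mono)
  have "0 < Bsum F f n r"
    using \<open>0 < Aobj F f n \<theta> r\<close> A[of r] c_nonneg[of r] assms by (auto simp: zero_less_mult_iff)
  then have "c r * Bsum F f n r \<le> c s * Bsum F f n s"
    using \<open>c r \<le> c s\<close> assms c_nonneg by (intro mult_mono) auto
  then show ?thesis using A assms by simp
qed

lemma Bsum_le_Bsum_Max_pos_beta:
  fixes F f :: "real \<Rightarrow> real" and n r :: nat
  defines "rhat \<equiv> Max {k \<in> {1..n}. beta F f n k > 0}"
  assumes "rhat \<le> r" "r \<le> n"
  shows "Bsum F f n r \<le> Bsum F f n rhat"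
  using assms(2,3)
proof (induction r rule: dec_induct)
  case (step m)
  have "\<not> beta F f n (Suc m) > 0"
  proof
    assume "beta F f n (Suc m) > 0"
    then have "Suc m \<le> rhat" unfolding rhat_def using step by (intro Max_ge) auto
    then show False using step by simp
  qed
  then show ?case using step by (simp add: Bsum_Suc)
qed simp

lemma ex_maximizer_between:
  fixes A :: "'a::linorder \<Rightarrow> real"
  assumes "finite S" "a \<in> S" "b \<in> S" "a \<le> b" "s \<in> S" "0 < A s"
    and below: "\<And>r. r \<in> S \<Longrightarrow> r < a \<Longrightarrow> A r \<le> A a"
    and above: "\<And>r. r \<in> S \<Longrightarrow> b < r \<Longrightarrow> 0 < A r \<Longrightarrow> A r \<le> A b"
  shows "\<exists>r\<in>S. (\<forall>r'\<in>S. A r' \<le> A r) \<and> a \<le> r \<and> r \<le> b"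
proof -
  have "A ` S \<noteq> {}" using \<open>a \<in> S\<close> by blast
  then have "Max (A ` S) \<in> A ` S" using \<open>finite S\<close> by simp
  then obtain m where m: "m \<in> S" "A m = Max (A ` S)" by (metis imageE)
  then have max: "\<forall>r'\<in>S. A r' \<le> A m"
    using Max_ge[of "A ` S"] \<open>finite S\<close> by auto
  consider "m < a" | "b < m" | "a \<le> m" "m \<le> b"
    using not_less by blast
  then show ?thesis
  proof cases
    case 1
    then have "A m \<le> A a" using below m(1) by blast
    then have "\<forall>r'\<in>S. A r' \<le> A a" using max by (meson order_trans)
    then show ?thesis using assms(2,4) by blast
  next
    case 2
    have "0 < A m" using max assms(5,6) by (meson less_le_trans)
    then have "A m \<le> A b" using above m(1) 2 by blast
    then have "\<forall>r'\<in>S. A r' \<le> A b" using max by (meson order_trans)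
    then show ?thesis using assms(3,4) by blast
  next
    case 3
    then show ?thesis using m(1) max by blast
  qed
qed

lemma Bsum_ratio_maximizer_pos:
  assumes "0 < beta F f n 1" "r0 \<in> {1..n-1}"
    and "\<And>r. r \<in> {1..n-1} \<Longrightarrow> Bsum F f n r / real r \<le> Bsum F f n r0 / real r0"
  shows "0 < Bsum F f n r0 / real r0"
  using assms(1) assms(3)[of 1] assms(2) by (simp add: Bsum_def)

lemma Bsum_ratio_maximizer_le_Max_pos_beta:
  fixes F f :: "real \<Rightarrow> real" and n r0 :: nat
  defines "rhat \<equiv> Max {k \<in> {1..n}. beta F f n k > 0}"
  assumes beta1: "0 < beta F f n 1" and r0: "r0 \<in> {1..n-1}"
    and max: "\<And>r. r \<in> {1..n-1} \<Longrightarrow> Bsum F f n r / real r \<le> Bsum F f n r0 / real r0"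
  shows "r0 \<le> rhat"
proof (rule ccontr)
  assume "\<not> r0 \<le> rhat"
  have "1 \<le> rhat" unfolding rhat_def using beta1 r0 by (intro Max_ge) auto
  have "0 < Bsum F f n r0 / real r0" using Bsum_ratio_maximizer_pos[OF beta1 r0 max] .
  then have "0 < Bsum F f n r0" using r0 by (simp add: zero_less_divide_iff)
  have "Bsum F f n r0 / real r0 < Bsum F f n r0 / real rhat"
    using \<open>0 < Bsum F f n r0\<close> \<open>\<not> r0 \<le> rhat\<close> \<open>1 \<le> rhat\<close> by (intro divide_strict_left_mono) auto
  also have "\<dots> \<le> Bsum F f n rhat / real rhat"
    using Bsum_le_Bsum_Max_pos_beta[where r = r0] \<open>\<not> r0 \<le> rhat\<close> r0
    by (intro divide_right_mono) (auto simp: rhat_def)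
  also have "\<dots> \<le> Bsum F f n r0 / real r0"
    using max[of rhat] \<open>\<not> r0 \<le> rhat\<close> \<open>1 \<le> rhat\<close> r0 by auto
  finally show False by simp
qed

lemma ex_Aobj_maximizer_between:
  fixes F f :: "real \<Rightarrow> real" and n r0 :: nat
  defines "rhat \<equiv> Max {k \<in> {1..n}. beta F f n k > 0}"
  assumes beta1: "0 < beta F f n 1" and r0: "r0 \<in> {1..n-1}"
    and max: "\<And>r. r \<in> {1..n-1} \<Longrightarrow> Bsum F f n r / real r \<le> Bsum F f n r0 / real r0"
    and \<theta>: "\<theta> \<in> {0..1}"
  shows "\<exists>r\<in>{1..n-1}. (\<forall>r'\<in>{1..n-1}. Aobj F f n \<theta> r' \<le> Aobj F f n \<theta> r) \<and> r0 \<le> r \<and> r \<le> rhat"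
proof -
  have "r0 \<le> rhat"
    unfolding rhat_def by (rule Bsum_ratio_maximizer_le_Max_pos_beta[OF beta1 r0 max])
  have "1 \<le> rhat" unfolding rhat_def using beta1 r0 by (intro Max_ge) auto
  have "0 < Aobj F f n \<theta> 1"
  proof -
    have "0 < (1 - \<theta>) / real 1 + 2 * \<theta> / real n"
      using \<theta> r0 by (cases "\<theta> = 1") (auto intro: add_pos_nonneg)
    moreover have "Aobj F f n \<theta> 1 = ((1 - \<theta>) / real 1 + 2 * \<theta> / real n) * beta F f n 1"
      using Aobj_eq_weighted_Bsum[of 1 n F f \<theta>] r0 by (auto simp: Bsum_def)
    ultimately show ?thesis using beta1 by simp
  qed
  \<comment> \<open>\<open>rhat\<close> may be \<open>n\<close>, outside the admissible range\<close>
  have "\<exists>r\<in>{1..n-1}. (\<forall>r'\<in>{1..n-1}. Aobj F f n \<theta> r' \<le> Aobj F f n \<theta> r) \<and> r0 \<le> r \<and> r \<le> min rhat (n - 1)"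
  proof (rule ex_maximizer_between)
    show "1 \<in> {1..n-1}" "min rhat (n - 1) \<in> {1..n-1}" "r0 \<le> min rhat (n - 1)"
      using r0 \<open>r0 \<le> rhat\<close> \<open>1 \<le> rhat\<close> by auto
    show "Aobj F f n \<theta> r \<le> Aobj F f n \<theta> r0" if "r \<in> {1..n-1}" "r < r0" for r
      using Aobj_le_of_ratio_le[OF \<theta>] max[OF that(1)] Bsum_ratio_maximizer_pos[OF beta1 r0 max] that
      by simp
    show "Aobj F f n \<theta> r \<le> Aobj F f n \<theta> (min rhat (n - 1))"
      if "r \<in> {1..n-1}" "min rhat (n - 1) < r" "0 < Aobj F f n \<theta> r" for r
    proof -
      have "min rhat (n - 1) = rhat" using that by auto
      moreover have "Bsum F f n r \<le> Bsum F f n rhat"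
        using Bsum_le_Bsum_Max_pos_beta[where r = r] that \<open>min rhat (n - 1) = rhat\<close>
        by (auto simp: rhat_def)
      ultimately show ?thesis
        using Aobj_le_of_Bsum_le[OF \<theta>] that \<open>1 \<le> rhat\<close> by simp
    qed
  qed (use r0 \<open>0 < Aobj F f n \<theta> 1\<close> in auto)
  then show ?thesis by (meson min.boundedE)
qed

locale noise_density =
  fixes F f :: "real \<Rightarrow> real"
  assumes f_nonneg: "\<And>t. f t \<ge> 0"
    and f_int: "integrable lborel f"
    and f_total: "(\<integral>t. f t \<partial>lborel) = 1"
    and F_cdf: "\<And>x. F x = (LINT t:{..x}|lborel. f t)"
    and f2_int: "integrable lborel (\<lambda>t. (f t)\<^sup>2)"
begin

definition M :: "real measure" where "M = density lborel (\<lambda>t. ennreal (f t))"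

lemma f_measurable [measurable]: "f \<in> borel_measurable borel"
  using borel_measurable_integrable[OF f_int] by simp

lemma sets_M [simp, measurable_cong]: "sets M = sets borel" and space_M [simp]: "space M = UNIV"
  by (simp_all add: M_def)

lemma real_distribution_M: "real_distribution M"
proof -
  have "emeasure M UNIV = ennreal (\<integral>t. f t \<partial>lborel)"
    unfolding M_def using f_int f_nonneg
    by (simp add: emeasure_density nn_integral_eq_integral)
  then have "prob_space M" by (intro prob_spaceI) (simp add: f_total)
  then show ?thesis by (simp add: real_distribution_def real_distribution_axioms_def)
qed

sublocale M: real_distribution M
  by (rule real_distribution_M)

lemma measure_M:
  assumes "A \<in> sets borel"
  shows "measure M A = (\<integral>t. f t * indicator A t \<partial>lborel)"
proof -
  have "measure M A = integral\<^sup>L M (indicator A)" using assms by simp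
  then show ?thesis
    unfolding M_def using assms f_nonneg by (subst (asm) integral_density) auto
qed

lemma cdf_M: "cdf M = F"
  unfolding cdf_def F_cdf set_lebesgue_integral_def by (simp add: measure_M mult.commute)

lemma measure_atMost_M: "measure M {..x} = F x"
  using fun_cong[OF cdf_M, of x] by (simp add: cdf_def)

lemma F_mono: "x \<le> y \<Longrightarrow> F x \<le> F y"
  using M.cdf_nondecreasing by (simp add: cdf_M)

lemma F_nonneg: "0 \<le> F x" and F_le_1: "F x \<le> 1"
  using M.cdf_nonneg M.cdf_bounded_prob by (simp_all add: cdf_M)

lemma F_measurable [measurable]: "F \<in> borel_measurable borel"
  by (rule borel_measurable_mono) (simp add: mono_def F_mono)

lemma hazard_measurable [measurable]: "hazard F f \<in> borel_measurable borel"
  unfolding hazard_def by measurable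

lemma isCont_F: "isCont F x"
proof -
  have "measure M {x} = 0"
    using AE_lborel_singleton[of x]
    unfolding measure_M[of "{x}", OF borel_singleton[OF sets.empty_sets]] by (auto intro!: integral_eq_zero_AE elim!: eventually_mono)
  then show ?thesis using M.isCont_cdf[of x] by (simp add: cdf_M)
qed

lemma F_attains: assumes "0 < y" "y < 1" shows "\<exists>t. F t = y"
proof -
  have "eventually (\<lambda>t. F t < y) at_bot" "eventually (\<lambda>t. y < F t) at_top"
    using order_tendstoD(2)[OF M.cdf_lim_at_bot] order_tendstoD(1)[OF M.cdf_lim_at_top_prob] assms
    by (simp_all add: cdf_M)
  then obtain a b where "F a < y" "y < F b" "a \<le> b"
    unfolding eventually_at_bot_linorder eventually_at_top_linorder by (meson linorder_le_cases order.refl)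
  then show ?thesis using IVT[of F a y b] isCont_F by force
qed

lemma measure_F_le_upper:
  assumes "0 \<le> x" "x < 1"
  shows "measure M {t. F t \<le> x} \<le> x"
proof (rule field_le_epsilon)
  fix e :: real assume "0 < e"
  define e' where "e' = min e ((1 - x) / 2)"
  have "e' \<le> (1 - x) / 2" unfolding e'_def by (rule min.cobounded2)
  then have e': "0 < e'" "e' \<le> e" "x + e' < 1" using \<open>0 < e\<close> assms by (auto simp: e'_def)
  obtain b where b: "F b = x + e'" using F_attains[of "x + e'"] e' assms by auto
  have "{t. F t \<le> x} \<subseteq> {..b}"
  proof
    fix t assume "t \<in> {t. F t \<le> x}"
    then have "F t < F b" using b e' by simp
    then show "t \<in> {..b}" using F_mono[of b t] by (cases "t \<le> b") auto
  qed
  then have "measure M {t. F t \<le> x} \<le> measure M {..b}"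
    by (intro M.finite_measure_mono) auto
  also have "\<dots> = x + e'" using b measure_atMost_M by simp
  finally show "measure M {t. F t \<le> x} \<le> x + e" using e' by simp
qed

lemma measure_F_le:
  assumes "0 \<le> x" "x \<le> 1"
  shows "measure M {t. F t \<le> x} = x"
proof (cases "x = 1")
  case True
  then show ?thesis using F_le_1 M.prob_space by simp
next
  case False
  have "x \<le> measure M {t. F t \<le> x}"
  proof (cases "x = 0")
    case False
    then obtain a where "F a = x" using F_attains[of x] assms \<open>x \<noteq> 1\<close> by auto
    then have "x = measure M {..a}" using measure_atMost_M by simp
    also have "\<dots> \<le> measure M {t. F t \<le> x}"
      using \<open>F a = x\<close> F_mono by (intro M.finite_measure_mono) auto
    finally show ?thesis .
  qed simp
  with measure_F_le_upper[of x] assms False show ?thesis by simp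
qed

lemma F_uniform: "distributed M lborel F (\<lambda>u. indicator {0..1} u / measure lborel {0..1::real})"
  by (rule M.uniform_distrI_borel_atLeastAtMost) (simp_all add: measure_F_le)

lemma integral_comp_F:
  assumes [measurable]: "\<phi> \<in> borel_measurable borel"
  shows "(\<integral>t. f t * \<phi> (F t) \<partial>lborel) = (\<integral>u. indicator {0..1} u * \<phi> u \<partial>lborel)"
proof -
  have "(\<integral>t. f t * \<phi> (F t) \<partial>lborel) = (\<integral>t. \<phi> (F t) \<partial>M)"
    unfolding M_def by (subst integral_density) (auto simp: f_nonneg)
  also have "\<dots> = (\<integral>u. indicator {0..1} u * \<phi> u \<partial>lborel)"
    using distributed_integral[OF F_uniform, of \<phi>] by simp
  finally show ?thesis .
qed

lemma AE_density_zero_or_supp_int: "AE t in lborel. f t = 0 \<or> t \<in> supp_int F"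
proof -
  have "AE u in lborel. u \<noteq> 0 \<and> u \<noteq> (1::real)"
    using AE_lborel_singleton[of 0] AE_lborel_singleton[of 1] by eventually_elim auto
  then have "AE u in lborel. 0 < ennreal (indicator {0..1::real} u / measure lborel {0..1::real})
      \<longrightarrow> 0 < u \<and> u < 1"
    by (elim eventually_mono) (auto split: split_indicator)
  then have "AE u in distr M lborel F. 0 < u \<and> u < 1"
    unfolding distributed_distr_eq_density[OF F_uniform] by (subst AE_density) auto
  then have "AE t in M. 0 < F t \<and> F t < 1" by (subst (asm) AE_distr_iff) auto
  then have "AE t in lborel. 0 < f t \<longrightarrow> 0 < F t \<and> F t < 1"
    unfolding M_def by (subst (asm) AE_density) auto
  then show ?thesis
    by eventually_elim (use f_nonneg in \<open>auto simp: supp_int_def less_le\<close>)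
qed

lemma integrable_comp_F_mult:
  fixes p g :: "real \<Rightarrow> real"
  assumes "continuous_on UNIV p" "integrable lborel g"
  shows "integrable lborel (\<lambda>t. p (F t) * g t)"
proof -
  have "compact (p ` {0..1})"
    by (rule compact_continuous_image[OF continuous_on_subset[OF assms(1)]]) auto
  then obtain K where "\<forall>x\<in>p ` {0..1}. norm x \<le> K"
    using compact_imp_bounded bounded_iff by metis
  then have K: "norm (p (F t)) \<le> K" for t
    using F_nonneg F_le_1 by auto
  have [measurable]: "p \<in> borel_measurable borel" "g \<in> borel_measurable borel"
    using borel_measurable_continuous_onI[OF assms(1)] borel_measurable_integrable[OF assms(2)]
    by simp_all
  show ?thesis
  proof (rule Bochner_Integration.integrable_bound)
    show "integrable lborel (\<lambda>t. K * norm (g t))" using assms(2) by simp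
    show "AE t in lborel. norm (p (F t) * g t) \<le> norm (K * norm (g t))"
    proof (rule AE_I2)
      fix t
      have "norm (p (F t) * g t) \<le> K * norm (g t)"
        unfolding norm_mult using K by (rule mult_right_mono) simp
      also have "\<dots> \<le> norm (K * norm (g t))"
        by (simp add: abs_mult mult_right_mono)
      finally show "norm (p (F t) * g t) \<le> norm (K * norm (g t))" .
    qed
  qed measurable
qed

definition Bratio :: "nat \<Rightarrow> nat \<Rightarrow> real" where
  "Bratio n r = real ((n - 1) choose r) * (\<integral>t. F t ^ (n - 1 - r) * (1 - F t) ^ (r - 1) * (f t)\<^sup>2 \<partial>lborel)"

lemma integrable_poly_F_mult_f2: "integrable lborel (\<lambda>t. F t ^ i * (1 - F t) ^ j * (f t)\<^sup>2)"
  using integrable_comp_F_mult[OF _ f2_int, of "\<lambda>u. u ^ i * (1 - u) ^ j"]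
  by (simp add: continuous_intros)

lemma Bsum_eq_mult_Bratio:
  assumes "1 \<le> r" "r \<le> n - 1"
  shows "Bsum F f n r = real r * Bratio n r"
proof -
  obtain m where m: "r = Suc m" using assms by (cases r) auto
  have int: "integrable lborel (\<lambda>t. gpoly_deriv n k (F t) * (f t)\<^sup>2)" for k
    using integrable_comp_F_mult[OF continuous_on_gpoly_deriv f2_int] .
  have "Bsum F f n r
      = (\<Sum>k=1..r. (\<integral>t. real ((n - 1) choose (k - 1)) * (gpoly_deriv n k (F t) * (f t)\<^sup>2) \<partial>lborel))"
    unfolding Bsum_def beta_def deriv_gpoly by simp
  also have "\<dots> = (\<integral>t. (\<Sum>k=1..r. real ((n - 1) choose (k - 1)) * gpoly_deriv n k (F t)) * (f t)\<^sup>2 \<partial>lborel)"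
    using int by (simp add: sum_distrib_right mult.assoc)
  also have "\<dots> = (\<integral>t. real r * real ((n - 1) choose r)
                      * (F t ^ (n - 1 - r) * (1 - F t) ^ (r - 1) * (f t)\<^sup>2) \<partial>lborel)"
    using sum_binomial_gpoly_deriv[of m n] assms m by (simp add: mult.assoc)
  also have "\<dots> = real r * Bratio n r" unfolding Bratio_def by simp
  finally show ?thesis .
qed

lemma Bratio_nonneg: "0 \<le> Bratio n r"
  unfolding Bratio_def using F_nonneg F_le_1
  by (intro mult_nonneg_nonneg integral_nonneg_AE AE_I2) auto

lemma beta_1_pos:
  assumes "2 \<le> n"
  shows "0 < beta F f n 1"
proof -
  have "beta F f n 1 = real (n - 1) * (\<integral>t. F t ^ (n - 2) * (1 - F t) ^ 0 * (f t)\<^sup>2 \<partial>lborel)"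
    using Bsum_eq_mult_Bratio[of 1 n] assms
    by (simp add: Bsum_def Bratio_def numeral_2_eq_2)
  moreover have "0 < (\<integral>t. F t ^ (n - 2) * (1 - F t) ^ 0 * (f t)\<^sup>2 \<partial>lborel)"
  proof (rule ccontr)
    have nonneg: "AE t in lborel. 0 \<le> F t ^ (n - 2) * (1 - F t) ^ 0 * (f t)\<^sup>2"
      using F_nonneg by simp
    assume "\<not> ?thesis"
    then have "(\<integral>t. F t ^ (n - 2) * (1 - F t) ^ 0 * (f t)\<^sup>2 \<partial>lborel) = 0"
      using integral_nonneg_AE[OF nonneg] by linarith
    then have "AE t in lborel. F t ^ (n - 2) * (1 - F t) ^ 0 * (f t)\<^sup>2 = 0"
      using integral_nonneg_eq_0_iff_AE[OF integrable_poly_F_mult_f2 nonneg] by simp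
    then have "AE t in lborel. f t = 0"
      using AE_density_zero_or_supp_int by eventually_elim (auto simp: supp_int_def)
    then have "(\<integral>t. f t \<partial>lborel) = 0" by (rule integral_eq_zero_AE)
    then show False using f_total by simp
  qed
  ultimately show ?thesis using assms by simp
qed

lemma ex_hazard_threshold:
  fixes \<psi> :: "real \<Rightarrow> real"
  assumes dfr: "antimono_on (supp_int F) (hazard F f)"
    and crossing: "\<And>u v. u \<in> {0..1} \<Longrightarrow> v \<in> {0..1} \<Longrightarrow> 0 < \<psi> u \<Longrightarrow> \<psi> v < 0 \<Longrightarrow> u < v"
    and t0: "t0 \<in> supp_int F" "0 < \<psi> (F t0)"
  obtains c where "\<And>t. t \<in> supp_int F \<Longrightarrow> 0 \<le> \<psi> (F t) * (hazard F f t - c)"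
proof
  define P where "P = {t \<in> supp_int F. 0 < \<psi> (F t)}"
  define c where "c = Inf (hazard F f ` P)"
  have "bdd_below (hazard F f ` P)"
    using f_nonneg unfolding P_def supp_int_def hazard_def by (intro bdd_belowI[of _ 0]) auto
  fix t assume t: "t \<in> supp_int F"
  consider "0 < \<psi> (F t)" | "\<psi> (F t) < 0" | "\<psi> (F t) = 0" by linarith
  then show "0 \<le> \<psi> (F t) * (hazard F f t - c)"
  proof cases
    case 1
    then have "c \<le> hazard F f t"
      unfolding c_def using t \<open>bdd_below _\<close> by (intro cInf_lower) (auto simp: P_def)
    then show ?thesis using 1 by simp
  next
    case 2
    have "hazard F f t \<le> c"
      unfolding c_def
    proof (rule cInf_greatest)
      show "hazard F f ` P \<noteq> {}" using t0 by (auto simp: P_def)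
      fix y assume "y \<in> hazard F f ` P"
      then obtain s where s: "s \<in> P" "y = hazard F f s" by auto
      then have "F s < F t"
        using crossing[of "F s" "F t"] 2 F_nonneg F_le_1 by (auto simp: P_def)
      then have "s \<le> t" using F_mono[of t s] by (cases "s \<le> t") auto
      then show "hazard F f t \<le> y"
        using monotone_onD[OF dfr] s t by (auto simp: P_def)
    qed
    then show ?thesis using 2 by (simp add: mult_nonpos_nonpos)
  qed simp
qed

lemma integral_hazard_nonneg_if_single_crossing:
  fixes \<psi> :: "real \<Rightarrow> real"
  assumes dfr: "antimono_on (supp_int F) (hazard F f)"
    and cont: "continuous_on UNIV \<psi>"
    and crossing: "\<And>u v. u \<in> {0..1} \<Longrightarrow> v \<in> {0..1} \<Longrightarrow> 0 < \<psi> u \<Longrightarrow> \<psi> v < 0 \<Longrightarrow> u < v"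
    and pos: "u0 \<in> {0<..<1}" "0 < \<psi> u0"
    and zero: "(\<integral>u. indicator {0..1} u * \<psi> u \<partial>lborel) = 0"
  shows "0 \<le> (\<integral>t. \<psi> (F t) * hazard F f t * f t \<partial>lborel)"
proof (cases "integrable lborel (\<lambda>t. \<psi> (F t) * hazard F f t * f t)")
  case True
  obtain t0 where "F t0 = u0" using F_attains pos(1) by auto
  then have "t0 \<in> supp_int F" using pos(1) by (simp add: supp_int_def)
  moreover have "0 < \<psi> (F t0)" using pos(2) \<open>F t0 = u0\<close> by simp
  ultimately obtain c where c: "\<And>t. t \<in> supp_int F \<Longrightarrow> 0 \<le> \<psi> (F t) * (hazard F f t - c)"
    using ex_hazard_threshold[OF dfr crossing] by blast
  have int_f: "integrable lborel (\<lambda>t. \<psi> (F t) * f t)"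
    by (rule integrable_comp_F_mult[OF cont f_int])
  have "(\<integral>t. \<psi> (F t) * f t \<partial>lborel) = 0"
    using integral_comp_F[OF borel_measurable_continuous_onI[OF cont]] zero
    by (simp add: mult.commute)
  have "0 \<le> (\<integral>t. \<psi> (F t) * hazard F f t * f t - c * (\<psi> (F t) * f t) \<partial>lborel)"
    using AE_density_zero_or_supp_int
  proof (intro integral_nonneg_AE, eventually_elim)
    case (elim t)
    from \<open>f t = 0 \<or> t \<in> supp_int F\<close> show ?case
    proof
      assume "t \<in> supp_int F"
      then have "0 \<le> f t * (\<psi> (F t) * (hazard F f t - c))" using c f_nonneg by simp
      then show ?thesis by (simp add: algebra_simps)
    qed simp
  qed
  also have "\<dots> = (\<integral>t. \<psi> (F t) * hazard F f t * f t \<partial>lborel)"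
    using True int_f \<open>(\<integral>t. \<psi> (F t) * f t \<partial>lborel) = 0\<close> by simp
  finally show ?thesis .
qed (simp add: not_integrable_integral_eq) \<comment> \<open>a non-integrable function has integral \<open>0\<close>\<close>

lemma Bratio_Suc_diff_eq:
  assumes "1 \<le> r" "Suc r \<le> n - 1"
  shows "real (Suc r) * (Bratio n (Suc r) - Bratio n r)
       = real ((n - 1) choose r) * (\<integral>t. gpoly_deriv (n + 1) (r + 2) (F t) * hazard F f t * f t \<partial>lborel)"
proof -
  obtain b where b: "r = Suc b" using assms by (cases r) auto
  have "b + 3 \<le> n" using assms b by simp
  then obtain a where a: "n = b + 3 + a" using le_Suc_ex by blast
  define c where "c = real ((n - 1) choose r)"
  define G where "G u = real (Suc a) * u ^ a * (1 - u) ^ Suc b - real (Suc r) * u ^ Suc a * (1 - u) ^ b"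
    for u :: real
  have "n - 1 - r = Suc a" using a b by simp
  with binomial_mult_diff[of "n - 1" r]
  have binom: "real (Suc r) * real ((n - 1) choose Suc r) = c * real (Suc a)"
    unfolding c_def by (metis mult.commute of_nat_mult)
  have "real (Suc r) * (Bratio n (Suc r) - Bratio n r)
      = c * real (Suc a) * (\<integral>t. F t ^ a * (1 - F t) ^ Suc b * (f t)\<^sup>2 \<partial>lborel)
        - c * real (Suc r) * (\<integral>t. F t ^ Suc a * (1 - F t) ^ b * (f t)\<^sup>2 \<partial>lborel)"
    unfolding Bratio_def c_def binom[unfolded c_def, symmetric] using a b
    by (simp add: algebra_simps numeral_3_eq_3)
  also have "\<dots> = c * (\<integral>t. real (Suc a) * (F t ^ a * (1 - F t) ^ Suc b * (f t)\<^sup>2)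
      - real (Suc r) * (F t ^ Suc a * (1 - F t) ^ b * (f t)\<^sup>2) \<partial>lborel)"
  proof -
    note int = integrable_mult_right[OF integrable_poly_F_mult_f2]
    show ?thesis
      unfolding Bochner_Integration.integral_diff[OF int int] integral_mult_right_zero
      by (simp add: algebra_simps)
  qed
  also have "\<dots> = c * (\<integral>t. G (F t) * (f t)\<^sup>2 \<partial>lborel)"
    unfolding G_def by (simp add: algebra_simps)
  also have "(\<integral>t. G (F t) * (f t)\<^sup>2 \<partial>lborel)
      = (\<integral>t. gpoly_deriv (n + 1) (r + 2) (F t) * hazard F f t * f t \<partial>lborel)"
  \<comment> \<open>\<open>(1 - u) G u\<close> is \<open>g'\<close> for \<open>n + 1\<close> contestants and rank \<open>r + 2\<close>, and \<open>h = f / (1 - F)\<close>\<close>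
  proof (rule integral_cong_AE)
    have G: "gpoly_deriv (n + 1) (r + 2) u = (1 - u) * G u" for u
      unfolding gpoly_deriv_def G_def using a b by (simp add: algebra_simps numeral_3_eq_3)
    show "AE t in lborel. G (F t) * (f t)\<^sup>2 = gpoly_deriv (n + 1) (r + 2) (F t) * hazard F f t * f t"
      using AE_density_zero_or_supp_int
      unfolding G by eventually_elim (auto simp: supp_int_def hazard_def power2_eq_square)
    show "(\<lambda>t. G (F t) * (f t)\<^sup>2) \<in> borel_measurable lborel"
      unfolding G_def by measurable
    show "(\<lambda>t. gpoly_deriv (n + 1) (r + 2) (F t) * hazard F f t * f t) \<in> borel_measurable lborel"
      using borel_measurable_continuous_onI[OF continuous_on_gpoly_deriv] by measurable
  qed
  finally show ?thesis unfolding c_def .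
qed

lemma Bratio_le_Bratio_Suc:
  assumes dfr: "antimono_on (supp_int F) (hazard F f)" and "1 \<le> r" "Suc r \<le> n - 1"
  shows "Bratio n r \<le> Bratio n (Suc r)"
proof -
  have k: "r + 2 < n + 1" "2 \<le> r + 2" using assms by simp_all
  obtain u0 where "u0 \<in> {0<..<1}" "0 < gpoly_deriv (n + 1) (r + 2) u0"
    using ex_gpoly_deriv_pos[OF k] by blast
  then have "0 \<le> (\<integral>t. gpoly_deriv (n + 1) (r + 2) (F t) * hazard F f t * f t \<partial>lborel)"
    using integral_hazard_nonneg_if_single_crossing[OF dfr continuous_on_gpoly_deriv
        gpoly_deriv_sign_change[OF k] _ _ integral_01_gpoly_deriv[OF k]]
    by blast
  then have "0 \<le> real (Suc r) * (Bratio n (Suc r) - Bratio n r)"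
    unfolding Bratio_Suc_diff_eq[OF assms(2,3)] by simp
  then show ?thesis by (simp add: zero_le_mult_iff)
qed

lemma Bratio_mono:
  assumes dfr: "antimono_on (supp_int F) (hazard F f)" and "1 \<le> r" "r \<le> s" "s \<le> n - 1"
  shows "Bratio n r \<le> Bratio n s"
  using assms(3,4)
proof (induction s rule: dec_induct)
  case (step m)
  then show ?case using Bratio_le_Bratio_Suc[OF dfr, of m n] assms(2) by simp
qed simp

lemma Aobj_le_Aobj_last_if_DFR:
  assumes dfr: "antimono_on (supp_int F) (hazard F f)" and "\<theta> \<in> {0..1}" "r \<in> {1..n-1}"
  shows "Aobj F f n \<theta> r \<le> Aobj F f n \<theta> (n - 1)"
proof (rule Aobj_le_of_ratio_le[OF assms(2)])
  have "Bsum F f n k / real k = Bratio n k" if "k \<in> {1..n-1}" for k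
    using Bsum_eq_mult_Bratio[of k n] that by simp
  then show "Bsum F f n r / real r \<le> Bsum F f n (n - 1) / real (n - 1)"
    "0 \<le> Bsum F f n (n - 1) / real (n - 1)"
    using Bratio_mono[OF dfr] Bratio_nonneg assms(3) by auto
qed (use assms(3) in simp)

end

theorem proposition3:
  fixes F f :: "real \<Rightarrow> real" and n :: nat
  assumes n2: "n \<ge> 2"
    and f_nonneg: "\<And>t. f t \<ge> 0"
    and f_int: "integrable lborel f"
    and f_total: "(\<integral>t. f t \<partial>lborel) = 1"
    and F_cdf: "\<And>x. F x = (LINT t:{..x}|lborel. f t)"
    and f2_int: "integrable lborel (\<lambda>t. (f t)\<^sup>2)"
  shows
    "(unimodal_on UNIV f \<and> unimodal_on (supp_int F) (hazard F f) \<longrightarrow>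
       (\<forall>r0. r0 \<in> {1..n-1} \<and> (\<forall>r\<in>{1..n-1}. Bsum F f n r / real r \<le> Bsum F f n r0 / real r0) \<longrightarrow>
          (let rhat = Max {r \<in> {1..n}. beta F f n r > 0} in
             r0 \<le> rhat \<and>
             (\<forall>\<theta>\<in>{0..1}. \<exists>r\<in>{1..n-1}.
                 (\<forall>r'\<in>{1..n-1}. Aobj F f n \<theta> r' \<le> Aobj F f n \<theta> r) \<and> r0 \<le> r \<and> r \<le> rhat))))
     \<and>
     (antimono_on (supp_int F) (hazard F f) \<longrightarrow>
       (\<forall>\<theta>\<in>{0..1}. \<forall>r\<in>{1..n-1}. Aobj F f n \<theta> r \<le> Aobj F f n \<theta> (n - 1)))"
proof -
  interpret noise_density F f
    using f_nonneg f_int f_total F_cdf f2_int by unfold_locales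
  have beta1: "0 < beta F f n 1" using n2 by (rule beta_1_pos)
  show ?thesis
    unfolding Let_def
    using Bsum_ratio_maximizer_le_Max_pos_beta[OF beta1] ex_Aobj_maximizer_between[OF beta1]
      Aobj_le_Aobj_last_if_DFR
    by blast
qed

end
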